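(* For every integer $n\ge 2$, the graphs $Bar_n$, $B_{n-1}^c$ and $K_n\cup K_n$ (disjoint union of two copies of $K_n$) all have the same domination polynomial, namely $\big((1+x)^n-1\big)^2$. Consequently $\{Bar_n, B_{n-1}^c, K_n\cup K_n\}\subseteq [Bar_n]=[B_{n-1}^c]$; in particular $Bar_n$ is not $\mathcal{D}$-unique.
   Context: All graphs are finite and simple. For a graph $G$, a set $S\subseteq V(G)$ is dominating if every vertex of $V(G)\setminus S$ is adjacent to some vertex of $S$. Let $d(G,i)$ be the number of dominating sets of $G$ of cardinality $i$; the domination polynomial is $D(G,x)=\sum_{i=1}^{|V(G)|} d(G,i)x^i$. Two graphs are $\mathcal{D}$-equivalent if they have the same domination polynomial; $[G]$ denotes the set of (isomorphism classes of) graphs $\mathcal{D}$-equivalent to $G$, and $G$ is $\mathcal{D}$-unique if $[G]=\{G\}$. The $n$-barbell graph $Bar_n$ is obtained from two vertex-disjoint copies of $K_n$ by adding a single edge joining a vertex of one copy to a vertex of the other. The $m$-book graph $B_m$ has vertex set $\{u,v,a_1,\dots,a_m,b_1,\dots,b_m\}$ and edges $uv$ and $ua_i, a_ib_i, b_iv$ ($1\le i\le m$); $B_m^c$ denotes its complement. *)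

theory Defs
  imports Main "HOL-Computational_Algebra.Polynomial"
begin

type_synonym 'a graph = "'a set \<times> 'a set set"

definition verts :: "'a graph \<Rightarrow> 'a set" where "verts G = fst G"
definition edges :: "'a graph \<Rightarrow> 'a set set" where "edges G = snd G"

definition simple_graph :: "'a graph \<Rightarrow> bool" where
  "simple_graph G \<longleftrightarrow> finite (verts G) \<and>
     (\<forall>e\<in>edges G. e \<subseteq> verts G \<and> card e = 2)"

definition adj :: "'a graph \<Rightarrow> 'a \<Rightarrow> 'a \<Rightarrow> bool" where
  "adj G u v \<longleftrightarrow> {u, v} \<in> edges G"

definition dominating :: "'a graph \<Rightarrow> 'a set \<Rightarrow> bool" where
  "dominating G S \<longleftrightarrow> S \<subseteq> verts G \<and> (\<forall>v \<in> verts G - S. \<exists>u\<in>S. adj G u v)"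

definition dom_count :: "'a graph \<Rightarrow> nat \<Rightarrow> nat" where
  "dom_count G i = card {S. dominating G S \<and> card S = i}"

definition dom_poly :: "'a graph \<Rightarrow> int poly" where
  "dom_poly G = (\<Sum>i = 1..card (verts G). monom (int (dom_count G i)) i)"

definition graph_iso :: "'a graph \<Rightarrow> 'b graph \<Rightarrow> bool" where
  "graph_iso G H \<longleftrightarrow> (\<exists>f. bij_betw f (verts G) (verts H) \<and>
     (\<forall>u\<in>verts G. \<forall>v\<in>verts G. adj G u v \<longleftrightarrow> adj H (f u) (f v)))"

definition D_equiv :: "'a graph \<Rightarrow> 'b graph \<Rightarrow> bool" where
  "D_equiv G H \<longleftrightarrow> dom_poly G = dom_poly H"

text \<open>The D-equivalence class [G] (graphs on the same vertex type).\<close>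
definition D_class :: "'a graph \<Rightarrow> 'a graph set" where
  "D_class G = {H. simple_graph H \<and> D_equiv H G}"

definition D_unique :: "'a graph \<Rightarrow> bool" where
  "D_unique G \<longleftrightarrow> (\<forall>H \<in> D_class G. graph_iso H G)"

definition complement :: "'a graph \<Rightarrow> 'a graph" where
  "complement G = (verts G, {{u, v} | u v. u \<in> verts G \<and> v \<in> verts G \<and> u \<noteq> v \<and> {u, v} \<notin> edges G})"

definition two_Kn :: "nat \<Rightarrow> nat graph" where
  "two_Kn n = ({0..<2*n},
     {{u, v} | u v. u \<noteq> v \<and> ((u < n \<and> v < n) \<or> (n \<le> u \<and> u < 2*n \<and> n \<le> v \<and> v < 2*n))})"

definition barbell :: "nat \<Rightarrow> nat graph" where
  "barbell n = ({0..<2*n}, edges (two_Kn n) \<union> {{0, n}})"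

text \<open>Book graph B_m: u = 0, v = 1, a_i = i + 1, b_i = m + i + 1 (1 \<le> i \<le> m).\<close>
definition book :: "nat \<Rightarrow> nat graph" where
  "book m = ({0..<2*m+2},
     {{0, 1}} \<union> (\<Union>i\<in>{1..m}. {{0, i+1}, {i+1, m+i+1}, {m+i+1, 1}}))"

end

theory Submission
  imports Defs
begin

text \<open>All three graphs have vertex set \<open>P \<union> Q\<close> with \<open>P\<close>, \<open>Q\<close> disjoint cliques of size \<open>n\<close>,
  and each part contains a vertex all of whose neighbours lie in that part: for \<open>Bar\<^sub>n\<close> any
  vertex away from the bridge; for \<open>B\<^sub>m\<^sup>c\<close> the parts are the two colour classes of the bipartite
  book graph, and \<open>u\<close>, \<open>v\<close> serve as these vertices since each is joined in \<open>B\<^sub>m\<close> to the whole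
  other class. Hence a set dominates iff it meets both parts, and the domination polynomial
  factors as \<open>((1+x)\<^sup>n - 1)\<^sup>2\<close>. Finally \<open>K\<^sub>n \<union> K\<^sub>n\<close> is not isomorphic to \<open>Bar\<^sub>n\<close>, since
  adjacency in it is transitive on distinct vertices.\<close>

lemma sum_Pow_monom_card:
  assumes "finite A"
  shows "(\<Sum>S\<in>Pow A. monom (1::int) (card S)) = [:1, 1:] ^ card A"
  using assms
proof (induction A rule: finite_induct)
  case empty
  then show ?case by simp
next
  case (insert a A)
  have disj: "Pow A \<inter> insert a ` Pow A = {}" using insert by auto
  have inj: "inj_on (insert a) (Pow A)"
    using insert unfolding inj_on_def by (metis Pow_iff insert_ident subset_iff)
  have "(\<Sum>S\<in>Pow (insert a A). monom (1::int) (card S))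
      = (\<Sum>S\<in>Pow A. monom 1 (card S)) + (\<Sum>S\<in>insert a ` Pow A. monom 1 (card S))"
    unfolding Pow_insert using disj insert by (simp add: sum.union_disjoint)
  also have "(\<Sum>S\<in>insert a ` Pow A. monom (1::int) (card S)) = (\<Sum>S\<in>Pow A. monom 1 (Suc (card S)))"
    using inj insert by (subst sum.reindex) (auto intro!: sum.cong simp: finite_subset card_insert_if)
  also have "\<dots> = monom 1 1 * (\<Sum>S\<in>Pow A. monom 1 (card S))"
    by (simp add: sum_distrib_left mult_monom)
  finally show ?case
    using insert by (simp add: algebra_simps monom_altdef)
qed

lemma sum_nonempty_Pow_monom_card:
  assumes "finite A"
  shows "(\<Sum>S\<in>Pow A - {{}}. monom (1::int) (card S)) = [:1, 1:] ^ card A - 1"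
  using sum_Pow_monom_card[OF assms] assms by (simp add: sum_diff1)

lemma dom_poly_eq_sum_dominating:
  assumes fin: "finite (verts G)"
  shows "dom_poly G = (\<Sum>S\<in>{S. dominating G S \<and> S \<noteq> {}}. monom 1 (card S))"
proof -
  define D where "D = {S. dominating G S \<and> S \<noteq> {}}"
  have D_Pow: "D \<subseteq> Pow (verts G)" unfolding D_def dominating_def by auto
  then have fin_D: "finite D" using fin finite_subset by blast
  have card_range: "card ` D \<subseteq> {1..card (verts G)}"
  proof
    fix k assume "k \<in> card ` D"
    then obtain S where S: "S \<in> D" "k = card S" by auto
    then have "S \<subseteq> verts G" "S \<noteq> {}" using D_Pow unfolding D_def by auto
    then show "k \<in> {1..card (verts G)}"
      using S fin by (auto simp: card_mono Suc_le_eq card_gt_0_iff finite_subset)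
  qed
  have "dom_poly G = (\<Sum>i = 1..card (verts G). \<Sum>S\<in>{S \<in> D. card S = i}. monom 1 (card S))"
    unfolding dom_poly_def
  proof (rule sum.cong[OF refl])
    fix i assume i: "i \<in> {1..card (verts G)}"
    have level: "{S. dominating G S \<and> card S = i} = {S \<in> D. card S = i}"
      using i unfolding D_def by auto
    have "(\<Sum>S\<in>{S \<in> D. card S = i}. monom (1::int) (card S))
        = of_nat (card {S \<in> D. card S = i}) * monom 1 i"
      by simp
    then show "monom (int (dom_count G i)) i = (\<Sum>S\<in>{S \<in> D. card S = i}. monom 1 (card S))"
      unfolding dom_count_def level by (simp add: of_nat_monom mult_monom)
  qed
  also have "\<dots> = (\<Sum>S\<in>D. monom 1 (card S))"
    by (rule sum.group[OF fin_D _ card_range]) simp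
  finally show ?thesis unfolding D_def .
qed

subsection \<open>Graphs whose dominating sets are those meeting two parts\<close>

definition clique :: "'a graph \<Rightarrow> 'a set \<Rightarrow> bool" where
  "clique G A \<longleftrightarrow> (\<forall>u\<in>A. \<forall>v\<in>A. u \<noteq> v \<longrightarrow> adj G u v)"

lemma dominating_iff_meets_both:
  assumes V: "verts G = P \<union> Q"
    and cliques: "clique G P" "clique G Q"
    and p: "p \<in> P" "\<And>u. adj G u p \<Longrightarrow> u \<in> P"
    and q: "q \<in> Q" "\<And>u. adj G u q \<Longrightarrow> u \<in> Q"
  shows "dominating G S \<longleftrightarrow> S \<subseteq> P \<union> Q \<and> S \<inter> P \<noteq> {} \<and> S \<inter> Q \<noteq> {}"
proof
  assume dom: "dominating G S"
  have "S \<inter> P \<noteq> {}"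
  proof (cases "p \<in> S")
    case False
    then obtain u where "u \<in> S" "adj G u p" using dom p(1) V unfolding dominating_def by blast
    then show ?thesis using p(2) by blast
  qed (use p in blast)
  moreover have "S \<inter> Q \<noteq> {}"
  proof (cases "q \<in> S")
    case False
    then obtain u where "u \<in> S" "adj G u q" using dom q(1) V unfolding dominating_def by blast
    then show ?thesis using q(2) by blast
  qed (use q in blast)
  ultimately show "S \<subseteq> P \<union> Q \<and> S \<inter> P \<noteq> {} \<and> S \<inter> Q \<noteq> {}"
    using dom V unfolding dominating_def by blast
next
  assume S: "S \<subseteq> P \<union> Q \<and> S \<inter> P \<noteq> {} \<and> S \<inter> Q \<noteq> {}"
  have "\<exists>u\<in>S. adj G u v" if v: "v \<in> P \<union> Q - S" for v
  proof (cases "v \<in> P")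
    case True
    obtain u where "u \<in> S" "u \<in> P" using S by blast
    then show ?thesis using True v cliques(1) unfolding clique_def by (metis Diff_iff)
  next
    case False
    obtain u where "u \<in> S" "u \<in> Q" using S by blast
    then show ?thesis using False v cliques(2) unfolding clique_def by (metis Diff_iff Un_iff)
  qed
  then show "dominating G S"
    using S V unfolding dominating_def by blast
qed

lemma dom_poly_meets_both:
  assumes fin: "finite P" "finite Q" and disj: "P \<inter> Q = {}"
    and V: "verts G = P \<union> Q"
    and dom: "\<And>S. dominating G S \<longleftrightarrow> S \<subseteq> P \<union> Q \<and> S \<inter> P \<noteq> {} \<and> S \<inter> Q \<noteq> {}"
  shows "dom_poly G = ([:1, 1:] ^ card P - 1) * ([:1, 1:] ^ card Q - 1)"
proof -
  let ?A = "(Pow P - {{}}) \<times> (Pow Q - {{}})"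
  let ?union = "\<lambda>(S, T). S \<union> T"
  have dominating_image: "{S. dominating G S \<and> S \<noteq> {}} = ?union ` ?A"
  proof (intro set_eqI iffI)
    fix S assume "S \<in> {S. dominating G S \<and> S \<noteq> {}}"
    then have S: "S \<subseteq> P \<union> Q" "S \<inter> P \<noteq> {}" "S \<inter> Q \<noteq> {}" using dom by blast+
    then have "(S \<inter> P, S \<inter> Q) \<in> ?A" by blast
    moreover have "S = ?union (S \<inter> P, S \<inter> Q)" using S(1) by auto
    ultimately show "S \<in> ?union ` ?A" by (rule rev_image_eqI)
  qed (use dom in blast)
  have inj: "inj_on ?union ?A"
  proof (rule inj_onI)
    have split: "x = (?union x \<inter> P, ?union x \<inter> Q)" if "x \<in> ?A" for x
      using that disj by auto
    fix x y assume "x \<in> ?A" "y \<in> ?A" "?union x = ?union y"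
    then show "x = y" using split by metis
  qed
  have card_union: "card (?union x) = card (fst x) + card (snd x)" if x: "x \<in> ?A" for x
  proof -
    obtain S T where "x = (S, T)" "S \<subseteq> P" "T \<subseteq> Q" using x by auto
    moreover have "S \<inter> T = {}" using calculation disj by blast
    ultimately show ?thesis using fin by (simp add: card_Un_disjoint finite_subset)
  qed
  have "finite (verts G)" using V fin by simp
  then have "dom_poly G = (\<Sum>x\<in>?A. monom 1 (card (?union x)))"
    using inj by (simp add: dom_poly_eq_sum_dominating dominating_image sum.reindex)
  also have "\<dots> = (\<Sum>x\<in>?A. monom 1 (card (fst x)) * monom 1 (card (snd x)))"
    by (rule sum.cong[OF refl]) (simp add: card_union mult_monom)
  also have "\<dots> = (\<Sum>S\<in>Pow P - {{}}. monom 1 (card S)) * (\<Sum>T\<in>Pow Q - {{}}. monom 1 (card T))"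
    by (simp add: sum_product sum.cartesian_product case_prod_beta)
  finally show ?thesis
    using sum_nonempty_Pow_monom_card[OF fin(1)] sum_nonempty_Pow_monom_card[OF fin(2)] by simp
qed

lemma verts_two_Kn: "verts (two_Kn n) = {0..<2*n}"
  by (simp add: verts_def two_Kn_def)

lemma verts_barbell: "verts (barbell n) = {0..<2*n}"
  by (simp add: verts_def barbell_def)

lemma verts_book: "verts (book m) = {0..<2*m+2}"
  by (simp add: verts_def book_def)

lemma verts_complement: "verts (complement G) = verts G"
  by (simp add: verts_def complement_def)

lemma adj_two_Kn:
  "adj (two_Kn n) u v \<longleftrightarrow> u \<noteq> v \<and> ((u < n \<and> v < n) \<or> (n \<le> u \<and> u < 2*n \<and> n \<le> v \<and> v < 2*n))"
  unfolding adj_def two_Kn_def edges_def by (auto simp: doubleton_eq_iff)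

lemma adj_barbell: "adj (barbell n) u v \<longleftrightarrow> adj (two_Kn n) u v \<or> {u, v} = {0, n}"
  unfolding adj_def barbell_def edges_def by (simp add: disj_commute)

lemma adj_complement:
  "adj (complement G) u v \<longleftrightarrow> u \<in> verts G \<and> v \<in> verts G \<and> u \<noteq> v \<and> \<not> adj G u v"
  unfolding adj_def complement_def edges_def verts_def by (auto simp: doubleton_eq_iff insert_commute)

lemma adj_book:
  "adj (book m) x y \<longleftrightarrow> {x, y} = {0, 1}
     \<or> (\<exists>i\<in>{1..m}. {x, y} = {0, i+1} \<or> {x, y} = {i+1, m+i+1} \<or> {x, y} = {m+i+1, 1})"
  unfolding adj_def book_def edges_def by auto

lemma dominating_two_Kn:
  assumes "n > 0"
  shows "dominating (two_Kn n) S
    \<longleftrightarrow> S \<subseteq> {0..<n} \<union> {n..<2*n} \<and> S \<inter> {0..<n} \<noteq> {} \<and> S \<inter> {n..<2*n} \<noteq> {}"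
  by (rule dominating_iff_meets_both[where p = 0 and q = n])
    (use assms in \<open>auto simp: verts_two_Kn clique_def adj_two_Kn\<close>)

lemma dominating_barbell:
  assumes "n \<ge> 2"
  shows "dominating (barbell n) S
    \<longleftrightarrow> S \<subseteq> {0..<n} \<union> {n..<2*n} \<and> S \<inter> {0..<n} \<noteq> {} \<and> S \<inter> {n..<2*n} \<noteq> {}"
  by (rule dominating_iff_meets_both[where p = 1 and q = "n + 1"])
    (use assms in \<open>auto simp: verts_barbell clique_def adj_barbell adj_two_Kn doubleton_eq_iff\<close>)

lemma dominating_complement_book:
  fixes m :: nat
  defines "P \<equiv> {0} \<union> {m+2..<2*m+2}" and "Q \<equiv> {1..m+1}"
  shows "dominating (complement (book m)) S \<longleftrightarrow> S \<subseteq> P \<union> Q \<and> S \<inter> P \<noteq> {} \<and> S \<inter> Q \<noteq> {}"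
proof (rule dominating_iff_meets_both[where p = 0 and q = 1])
  show "verts (complement (book m)) = P \<union> Q"
    unfolding verts_complement verts_book P_def Q_def by auto
  show "clique (complement (book m)) P" "clique (complement (book m)) Q"
    unfolding clique_def adj_complement adj_book verts_book P_def Q_def
    by (auto simp: doubleton_eq_iff)
  show "u \<in> P" if "adj (complement (book m)) u 0" for u
  proof (rule ccontr)
    assume "u \<notin> P"
    then have "u = 1 \<or> u - 1 \<in> {1..m} \<and> u = (u - 1) + 1"
      using that unfolding adj_complement verts_book P_def by auto
    then have "adj (book m) u 0"
      unfolding adj_book by (metis insert_commute)
    then show False using that by (simp add: adj_complement)
  qed
  show "u \<in> Q" if "adj (complement (book m)) u 1" for u
  proof (rule ccontr)
    assume "u \<notin> Q"
    then have "u = 0 \<or> u - m - 1 \<in> {1..m} \<and> u = m + (u - m - 1) + 1"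
      using that unfolding adj_complement verts_book Q_def by auto
    then have "adj (book m) u 1"
      unfolding adj_book by (metis insert_commute)
    then show False using that by (simp add: adj_complement)
  qed
  show "0 \<in> P" "1 \<in> Q" unfolding P_def Q_def by auto
qed

lemma dom_poly_two_Kn:
  assumes "n > 0"
  shows "dom_poly (two_Kn n) = ([:1, 1:] ^ n - 1) ^ 2"
proof -
  have "dom_poly (two_Kn n) = ([:1, 1:] ^ card {0..<n} - 1) * ([:1, 1:] ^ card {n..<2*n} - 1)"
    by (rule dom_poly_meets_both[OF _ _ _ _ dominating_two_Kn[OF assms]]) (auto simp: verts_two_Kn)
  then show ?thesis by (simp add: power2_eq_square)
qed

lemma dom_poly_barbell:
  assumes "n \<ge> 2"
  shows "dom_poly (barbell n) = ([:1, 1:] ^ n - 1) ^ 2"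
proof -
  have "dom_poly (barbell n) = ([:1, 1:] ^ card {0..<n} - 1) * ([:1, 1:] ^ card {n..<2*n} - 1)"
    by (rule dom_poly_meets_both[OF _ _ _ _ dominating_barbell[OF assms]]) (auto simp: verts_barbell)
  then show ?thesis by (simp add: power2_eq_square)
qed

lemma dom_poly_complement_book:
  "dom_poly (complement (book m)) = ([:1, 1:] ^ (m + 1) - 1) ^ 2"
proof -
  have "dom_poly (complement (book m))
      = ([:1, 1:] ^ card ({0} \<union> {m+2..<2*m+2}) - 1) * ([:1, 1:] ^ card {1..m+1} - 1)"
    by (rule dom_poly_meets_both[OF _ _ _ _ dominating_complement_book])
      (auto simp: verts_complement verts_book)
  then show ?thesis by (simp add: power2_eq_square card_insert_if)
qed

lemma simple_graphI:
  assumes "finite (verts G)"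
    and "\<And>e. e \<in> edges G \<Longrightarrow> \<exists>u v. e = {u, v} \<and> u \<noteq> v \<and> u \<in> verts G \<and> v \<in> verts G"
  shows "simple_graph G"
  unfolding simple_graph_def using assms by fastforce

lemma simple_graph_two_Kn: "simple_graph (two_Kn n)"
proof (rule simple_graphI)
  fix e assume "e \<in> edges (two_Kn n)"
  then show "\<exists>u v. e = {u, v} \<and> u \<noteq> v \<and> u \<in> verts (two_Kn n) \<and> v \<in> verts (two_Kn n)"
    unfolding verts_two_Kn by (fastforce simp: two_Kn_def edges_def)
qed (simp add: verts_two_Kn)

lemma simple_graph_barbell:
  assumes "n > 0"
  shows "simple_graph (barbell n)"
proof (rule simple_graphI)
  fix e assume "e \<in> edges (barbell n)"
  then have "e \<in> edges (two_Kn n) \<or> e = {0, n}"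
    by (auto simp: barbell_def edges_def)
  then show "\<exists>u v. e = {u, v} \<and> u \<noteq> v \<and> u \<in> verts (barbell n) \<and> v \<in> verts (barbell n)"
    unfolding verts_barbell using assms by (fastforce simp: two_Kn_def edges_def)
qed (simp add: verts_barbell)

lemma simple_graph_complement:
  assumes "finite (verts G)"
  shows "simple_graph (complement G)"
proof (rule simple_graphI)
  fix e assume "e \<in> edges (complement G)"
  then show "\<exists>u v. e = {u, v} \<and> u \<noteq> v \<and> u \<in> verts (complement G) \<and> v \<in> verts (complement G)"
    unfolding verts_complement by (auto simp: complement_def edges_def)
qed (simp add: verts_complement assms)

lemma not_graph_iso_two_Kn_barbell:
  assumes "n \<ge> 2"
  shows "\<not> graph_iso (two_Kn n) (barbell n)"
proof
  assume "graph_iso (two_Kn n) (barbell n)"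
  then obtain f where bij: "bij_betw f {0..<2*n} {0..<2*n}"
    and iso: "\<forall>u\<in>{0..<2*n}. \<forall>v\<in>{0..<2*n}. adj (two_Kn n) u v \<longleftrightarrow> adj (barbell n) (f u) (f v)"
    unfolding graph_iso_def verts_two_Kn verts_barbell by blast
  have "f ` {0..<2*n} = {0..<2*n}" using bij by (simp add: bij_betw_def)
  then have "1 \<in> f ` {0..<2*n}" "0 \<in> f ` {0..<2*n}" "n \<in> f ` {0..<2*n}"
    using assms by simp_all
  then obtain a b c where abc: "a \<in> {0..<2*n}" "b \<in> {0..<2*n}" "c \<in> {0..<2*n}"
    "1 = f a" "0 = f b" "n = f c"
    by (elim imageE)
  \<comment> \<open>\<open>1 - 0 - n\<close> is an induced path in \<open>Bar\<^sub>n\<close>, but adjacency in \<open>K\<^sub>n \<union> K\<^sub>n\<close> is transitive on distinct vertices.\<close>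
  have "adj (barbell n) 1 0" "adj (barbell n) 0 n" "\<not> adj (barbell n) 1 n"
    using assms by (auto simp: adj_barbell adj_two_Kn doubleton_eq_iff)
  then have "adj (two_Kn n) a b" "adj (two_Kn n) b c" "\<not> adj (two_Kn n) a c"
    using iso abc by simp_all
  moreover have "a \<noteq> c" using abc assms by auto
  ultimately show False unfolding adj_two_Kn by arith
qed

theorem mainTheorem4:
  fixes n :: nat
  assumes "n \<ge> 2"
  shows "dom_poly (barbell n) = ([:1, 1:] ^ n - 1) ^ 2
    \<and> dom_poly (complement (book (n - 1))) = ([:1, 1:] ^ n - 1) ^ 2
    \<and> dom_poly (two_Kn n) = ([:1, 1:] ^ n - 1) ^ 2
    \<and> {barbell n, complement (book (n - 1)), two_Kn n} \<subseteq> D_class (barbell n)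
    \<and> D_class (barbell n) = D_class (complement (book (n - 1)))
    \<and> \<not> D_unique (barbell n)"
proof -
  have bar: "dom_poly (barbell n) = ([:1, 1:] ^ n - 1) ^ 2"
    using dom_poly_barbell[OF assms] .
  have book: "dom_poly (complement (book (n - 1))) = ([:1, 1:] ^ n - 1) ^ 2"
    using dom_poly_complement_book[of "n - 1"] assms by simp
  have two: "dom_poly (two_Kn n) = ([:1, 1:] ^ n - 1) ^ 2"
    using dom_poly_two_Kn assms by simp
  have simple: "simple_graph (barbell n)" "simple_graph (complement (book (n - 1)))"
    "simple_graph (two_Kn n)"
    using assms by (simp_all add: simple_graph_barbell simple_graph_complement verts_book simple_graph_two_Kn)
  have members: "{barbell n, complement (book (n - 1)), two_Kn n} \<subseteq> D_class (barbell n)"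
    using simple bar book two by (auto simp: D_class_def D_equiv_def)
  moreover have "D_class (barbell n) = D_class (complement (book (n - 1)))"
    using bar book by (simp add: D_class_def D_equiv_def)
  moreover have "\<not> D_unique (barbell n)"
    using members not_graph_iso_two_Kn_barbell[OF assms] unfolding D_unique_def by auto
  ultimately show ?thesis using bar book two by blast
qed

end
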